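(* Assume the standing assumptions in the context. There exists at most one bounded constrained viscosity solution $v=(v_1,v_2)$ on $[\underline{x},+\infty)$ of the system $$\rho v_j(x)=H(x,y_j,Dv_j(x))+\lambda_j\big(v_{\bar\jmath}(x)-v_j(x)\big),\qquad j=1,2,\ \bar\jmath=3-j.$$
   Context: Standing assumptions: $\rho>0$; $-\infty<r<\rho$; $0<y_1<y_2$; $\gamma>1$; $\underline{x}\le0$ with $\rho\underline{x}+y_j>0$ for $j=1,2$; $\lambda_1,\lambda_2\ge0$ constants. Utility $u(c)=\frac{c^{1-\gamma}}{1-\gamma}$; Hamiltonian $H(x,y_j,p)=\sup_{c\ge0}\{u(c)+(rx+y_j-c)p\}$, equal to $(rx+y_j)p+\frac{\gamma}{1-\gamma}p^{1-1/\gamma}$ for $p\ge0$ and $+\infty$ for $p<0$. Viscosity subsolution on $S\subseteq[\underline{x},\infty)$: u.s.c. pair $v$ such that whenever $\varphi$ smooth, $j\in\{1,2\}$, and $v_j-\varphi$ has a local max (relative to $[\underline{x},\infty)$) at $x_0\in S$, then $\rho v_j(x_0)\le H(x_0,y_j,D\varphi(x_0))+\lambda_j(v_{\bar\jmath}(x_0)-v_j(x_0))$. Viscosity supersolution on $S$: l.s.c. pair with the reverse inequality at local minima $x_0\in S$. A constrained viscosity solution is a continuous pair that is a viscosity supersolution on $(\underline{x},\infty)$ and a viscosity subsolution on $[\underline{x},\infty)$. *)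

theory Defs
  imports "HOL-Analysis.Analysis" "HOL-Library.Extended_Real"
begin

text \<open>Pairs v = (v_1, v_2) are represented as v :: nat => real => real, used at j in {1,2};
  the index bar j is 3 - j.  Parameters y_j and lambda_j likewise as functions of j.\<close>

definition CRRA :: "real \<Rightarrow> real \<Rightarrow> real" where
  "CRRA \<gamma> c = c powr (1 - \<gamma>) / (1 - \<gamma>)"

text \<open>Hamiltonian H(x,y,p) = sup over c of u(c) + (r x + y - c) p, extended-real valued.
  Since gamma > 1, u(0) = -infinity, so c = 0 never contributes and the sup is over c > 0.\<close>
definition Ham :: "real \<Rightarrow> real \<Rightarrow> real \<Rightarrow> real \<Rightarrow> real \<Rightarrow> ereal" where
  "Ham r \<gamma> x y p = (SUP c \<in> {0<..}. ereal (CRRA \<gamma> c + (r * x + y - c) * p))"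

definition smooth_fun :: "(real \<Rightarrow> real) \<Rightarrow> bool" where
  "smooth_fun \<phi> \<longleftrightarrow> (\<forall>n x. ((deriv ^^ n) \<phi>) differentiable (at x))"

definition usc_on :: "real set \<Rightarrow> (real \<Rightarrow> real) \<Rightarrow> bool" where
  "usc_on D f \<longleftrightarrow> (\<forall>x\<in>D. \<forall>e>0. \<exists>d>0. \<forall>z\<in>D. \<bar>z - x\<bar> < d \<longrightarrow> f z < f x + e)"

definition lsc_on :: "real set \<Rightarrow> (real \<Rightarrow> real) \<Rightarrow> bool" where
  "lsc_on D f \<longleftrightarrow> (\<forall>x\<in>D. \<forall>e>0. \<exists>d>0. \<forall>z\<in>D. \<bar>z - x\<bar> < d \<longrightarrow> f x - e < f z)"

definition loc_max_rel :: "real set \<Rightarrow> (real \<Rightarrow> real) \<Rightarrow> real \<Rightarrow> bool" where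
  "loc_max_rel D f x0 \<longleftrightarrow> (\<exists>d>0. \<forall>z\<in>D. \<bar>z - x0\<bar> < d \<longrightarrow> f z \<le> f x0)"

definition loc_min_rel :: "real set \<Rightarrow> (real \<Rightarrow> real) \<Rightarrow> real \<Rightarrow> bool" where
  "loc_min_rel D f x0 \<longleftrightarrow> (\<exists>d>0. \<forall>z\<in>D. \<bar>z - x0\<bar> < d \<longrightarrow> f x0 \<le> f z)"

definition visc_sub :: "real \<Rightarrow> real \<Rightarrow> real \<Rightarrow> (nat \<Rightarrow> real) \<Rightarrow> (nat \<Rightarrow> real) \<Rightarrow> real
    \<Rightarrow> real set \<Rightarrow> (nat \<Rightarrow> real \<Rightarrow> real) \<Rightarrow> bool" where
  "visc_sub \<rho> r \<gamma> y lam xl S v \<longleftrightarrow>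
     (\<forall>j\<in>{1,2}. usc_on {xl..} (v j)) \<and>
     (\<forall>\<phi> j x0. smooth_fun \<phi> \<longrightarrow> j \<in> {1,2} \<longrightarrow> x0 \<in> S \<longrightarrow>
        loc_max_rel {xl..} (\<lambda>x. v j x - \<phi> x) x0 \<longrightarrow>
        ereal (\<rho> * v j x0) \<le> Ham r \<gamma> x0 (y j) (deriv \<phi> x0) + ereal (lam j * (v (3 - j) x0 - v j x0)))"

definition visc_super :: "real \<Rightarrow> real \<Rightarrow> real \<Rightarrow> (nat \<Rightarrow> real) \<Rightarrow> (nat \<Rightarrow> real) \<Rightarrow> real
    \<Rightarrow> real set \<Rightarrow> (nat \<Rightarrow> real \<Rightarrow> real) \<Rightarrow> bool" where
  "visc_super \<rho> r \<gamma> y lam xl S v \<longleftrightarrow>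
     (\<forall>j\<in>{1,2}. lsc_on {xl..} (v j)) \<and>
     (\<forall>\<phi> j x0. smooth_fun \<phi> \<longrightarrow> j \<in> {1,2} \<longrightarrow> x0 \<in> S \<longrightarrow>
        loc_min_rel {xl..} (\<lambda>x. v j x - \<phi> x) x0 \<longrightarrow>
        ereal (\<rho> * v j x0) \<ge> Ham r \<gamma> x0 (y j) (deriv \<phi> x0) + ereal (lam j * (v (3 - j) x0 - v j x0)))"

definition constrained_visc_sol :: "real \<Rightarrow> real \<Rightarrow> real \<Rightarrow> (nat \<Rightarrow> real) \<Rightarrow> (nat \<Rightarrow> real) \<Rightarrow> real
    \<Rightarrow> (nat \<Rightarrow> real \<Rightarrow> real) \<Rightarrow> bool" where
  "constrained_visc_sol \<rho> r \<gamma> y lam xl v \<longleftrightarrow>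
     (\<forall>j\<in>{1,2}. continuous_on {xl..} (v j)) \<and>
     visc_super \<rho> r \<gamma> y lam xl {xl<..} v \<and>
     visc_sub \<rho> r \<gamma> y lam xl {xl..} v"

definition bounded_pair :: "real \<Rightarrow> (nat \<Rightarrow> real \<Rightarrow> real) \<Rightarrow> bool" where
  "bounded_pair xl v \<longleftrightarrow> (\<exists>M. \<forall>j\<in>{1,2}. \<forall>x\<in>{xl..}. \<bar>v j x\<bar> \<le> M)"

end

theory Submission
  imports Defs
begin

(* Uniqueness follows from a comparison principle: a bounded continuous subsolution u on
   [xl, infinity) lies below a bounded continuous supersolution w on (xl, infinity).
   If u_j0(x0) - w_j0(x0) = d0 > 0, maximise
     Phi_j(x, z) = u_j(x) - w_j(z) - ((x - z + eps) / eps)^2 - beta (x + z - 2 xl)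
   over j in {1,2} and x, z >= xl.  Freezing one variable at the maximiser yields quadratic
   test functions with slopes p + beta and p - beta; since H(x, y, p) - (r x + y) p is
   nonincreasing in p, the sub- and supersolution inequalities subtract to
   rho Phi <= 4 |r| |t| + O(beta) with t = (x - z + eps) / eps, the switching terms cancelling
   because the maximum is also taken over j.  Uniform continuity of w forces t -> 0 as
   eps -> 0, while Phi at the maximiser stays above d0 / 2, a contradiction once beta is small. *)

lemma has_real_derivative_quadratic:
  "((\<lambda>x::real. a * (x - c)\<^sup>2 + b * x + d) has_real_derivative 2 * a * (x - c) + b) (at x)"
  by (auto intro!: derivative_eq_intros)

lemma deriv_quadratic: "deriv (\<lambda>x::real. a * (x - c)\<^sup>2 + b * x + d) x = 2 * a * (x - c) + b"
  by (rule DERIV_imp_deriv[OF has_real_derivative_quadratic])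

lemma smooth_fun_quadratic: "smooth_fun (\<lambda>x::real. a * (x - c)\<^sup>2 + b * x + d)"
proof -
  have "\<exists>a' b' d'. (deriv ^^ n) (\<lambda>x::real. a * (x - c)\<^sup>2 + b * x + d) = (\<lambda>x. a' * (x - c)\<^sup>2 + b' * x + d')"
    for n
  proof (induction n)
    case (Suc n)
    then obtain a' b' d' where IH: "(deriv ^^ n) (\<lambda>x::real. a * (x - c)\<^sup>2 + b * x + d) = (\<lambda>x. a' * (x - c)\<^sup>2 + b' * x + d')"
      by blast
    then have "(deriv ^^ Suc n) (\<lambda>x::real. a * (x - c)\<^sup>2 + b * x + d) = (\<lambda>x. 0 * (x - c)\<^sup>2 + (2 * a') * x + (b' - 2 * a' * c))"
      by (simp only: funpow.simps comp_def IH fun_eq_iff deriv_quadratic) (simp add: algebra_simps)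
    then show ?case by blast
  qed auto
  then show ?thesis
    unfolding smooth_fun_def real_differentiable_def using has_real_derivative_quadratic by metis
qed

text \<open>Apart from the drift term (r x + y) p, the Hamiltonian depends on p only through -c p with
  c > 0, which is antitone in p.\<close>

lemma Ham_le_Ham_shift:
  assumes "p' \<le> p"
  shows "Ham r \<gamma> x y p \<le> Ham r \<gamma> x' y p' + ereal ((r * x + y) * p - (r * x' + y) * p')"
  unfolding Ham_def
proof (rule SUP_least)
  fix c :: real assume c: "c \<in> {0<..}"
  have "CRRA \<gamma> c + (r * x + y - c) * p
      \<le> (CRRA \<gamma> c + (r * x' + y - c) * p') + ((r * x + y) * p - (r * x' + y) * p')"
    using c assms by (simp add: algebra_simps mult_left_mono)
  also have "ereal \<dots> \<le> (SUP c\<in>{0<..}. ereal (CRRA \<gamma> c + (r * x' + y - c) * p'))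
      + ereal ((r * x + y) * p - (r * x' + y) * p')"
    by (simp only: plus_ereal.simps(1)[symmetric]) (intro add_right_mono SUP_upper c)
  finally show "ereal (CRRA \<gamma> c + (r * x + y - c) * p) \<le> \<dots>" by simp
qed

lemma ereal_sub_super_diff:
  fixes H H' :: ereal
  assumes "ereal a \<le> H + ereal c" and "H' + ereal c' \<le> ereal b" and "H \<le> H' + ereal k"
  shows "a - b \<le> k + c - c'"
  using assms by (cases H; cases H') auto

lemma visc_subD:
  assumes "visc_sub \<rho> r \<gamma> y lam xl S v" and "smooth_fun \<phi>" and "j \<in> {1,2}" and "x0 \<in> S"
    and "loc_max_rel {xl..} (\<lambda>x. v j x - \<phi> x) x0"
  shows "ereal (\<rho> * v j x0) \<le> Ham r \<gamma> x0 (y j) (deriv \<phi> x0) + ereal (lam j * (v (3 - j) x0 - v j x0))"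
  using assms unfolding visc_sub_def by blast

lemma visc_superD:
  assumes "visc_super \<rho> r \<gamma> y lam xl S v" and "smooth_fun \<phi>" and "j \<in> {1,2}" and "x0 \<in> S"
    and "loc_min_rel {xl..} (\<lambda>x. v j x - \<phi> x) x0"
  shows "Ham r \<gamma> x0 (y j) (deriv \<phi> x0) + ereal (lam j * (v (3 - j) x0 - v j x0)) \<le> ereal (\<rho> * v j x0)"
  using assms unfolding visc_super_def by blast

lemma abs_le_if_sq_le_linear:
  fixes t a b :: real
  assumes "t\<^sup>2 \<le> a + b * \<bar>t\<bar>" and "0 \<le> a" and "b \<le> 1"
  shows "\<bar>t\<bar> \<le> a + 1"
proof (rule ccontr)
  assume "\<not> \<bar>t\<bar> \<le> a + 1"
  then have "(a + 1) * \<bar>t\<bar> < \<bar>t\<bar> * \<bar>t\<bar>" and "a * 1 \<le> a * \<bar>t\<bar>"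
    using assms(2) by (intro mult_strict_right_mono mult_left_mono; simp)+
  moreover have "b * \<bar>t\<bar> \<le> 1 * \<bar>t\<bar>"
    using assms(3) by (intro mult_right_mono) auto
  ultimately show False
    using assms(1) by (simp add: power2_eq_square algebra_simps)
qed

lemma bounded_pairs_common_bound:
  assumes "bounded_pair xl u" and "bounded_pair xl w"
  obtains C where "\<And>j x. j \<in> {1,2} \<Longrightarrow> xl \<le> x \<Longrightarrow> \<bar>u j x\<bar> \<le> C \<and> \<bar>w j x\<bar> \<le> C"
proof -
  obtain Cu Cw where "\<forall>j\<in>{1,2}. \<forall>x\<in>{xl..}. \<bar>u j x\<bar> \<le> Cu" and "\<forall>j\<in>{1,2}. \<forall>x\<in>{xl..}. \<bar>w j x\<bar> \<le> Cw"
    using assms unfolding bounded_pair_def by blast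
  then show thesis
    by (intro that[of "max Cu Cw"]) (auto simp: le_max_iff_disj)
qed

lemma uniformly_continuous_pair_modulus:
  fixes f :: "nat \<Rightarrow> real \<Rightarrow> real"
  assumes "compact S" and "\<forall>j\<in>{1,2}. continuous_on S (f j)" and "0 < \<eta>"
  obtains \<delta> where "0 < \<delta>"
    and "\<And>j a b. j \<in> {1,2} \<Longrightarrow> a \<in> S \<Longrightarrow> b \<in> S \<Longrightarrow> \<bar>a - b\<bar> < \<delta> \<Longrightarrow> \<bar>f j a - f j b\<bar> < \<eta>"
proof -
  have modulus: "\<exists>\<delta>>0. \<forall>a\<in>S. \<forall>b\<in>S. \<bar>a - b\<bar> < \<delta> \<longrightarrow> \<bar>f j a - f j b\<bar> < \<eta>"
    if "j \<in> {1,2}" for j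
  proof -
    have "uniformly_continuous_on S (f j)"
      using compact_uniformly_continuous assms(1,2) that by blast
    with \<open>0 < \<eta>\<close> obtain \<delta> where "0 < \<delta>" "\<forall>a\<in>S. \<forall>b\<in>S. dist b a < \<delta> \<longrightarrow> dist (f j b) (f j a) < \<eta>"
      unfolding uniformly_continuous_on_def by blast
    then show ?thesis
      unfolding dist_real_def by (metis abs_minus_commute)
  qed
  obtain \<delta>1 where "\<delta>1 > 0" "\<forall>a\<in>S. \<forall>b\<in>S. \<bar>a - b\<bar> < \<delta>1 \<longrightarrow> \<bar>f 1 a - f 1 b\<bar> < \<eta>"
    using modulus[of 1] by blast
  moreover obtain \<delta>2 where "\<delta>2 > 0" "\<forall>a\<in>S. \<forall>b\<in>S. \<bar>a - b\<bar> < \<delta>2 \<longrightarrow> \<bar>f 2 a - f 2 b\<bar> < \<eta>"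
    using modulus[of 2] by blast
  ultimately show thesis
    by (intro that[of "min \<delta>1 \<delta>2"]) auto
qed

lemma continuous_attains_sup_off_compact:
  fixes f :: "'a::topological_space \<Rightarrow> real"
  assumes "compact K" and "continuous_on K f" and "p0 \<in> K" and "\<And>q. q \<in> S - K \<Longrightarrow> f q \<le> f p0"
  obtains p where "p \<in> K" and "\<And>q. q \<in> S \<Longrightarrow> f q \<le> f p"
proof -
  obtain p where "p \<in> K" and "\<forall>q\<in>K. f q \<le> f p"
    using continuous_attains_sup[OF assms(1) _ assms(2)] assms(3) by blast
  with assms(3,4) show thesis
    by (intro that[of p]) (auto intro: order_trans)
qed

lemma eventually_at_right_0_mult_less:
  fixes c d :: real
  assumes "0 < d"
  shows "\<forall>\<^sub>F x in at_right 0. c * x < d"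
proof -
  have "((\<lambda>x. c * x) \<longlongrightarrow> c * 0) (at_right 0)"
    by (intro tendsto_intros)
  then show ?thesis
    using assms by (auto dest: order_tendstoD(2))
qed

lemma exists_pos_if_eventually_at_right_0:
  assumes "\<forall>\<^sub>F x in at_right (0::real). P x"
  shows "\<exists>x>0. P x"
  using eventually_happens'[OF _ eventually_conj[OF eventually_at_right_less assms]] by simp

lemma continuous_on_eventually_right_shift:
  fixes f :: "real \<Rightarrow> real"
  assumes "continuous_on {a..} f" and "a \<le> x" and "0 < e"
  shows "\<forall>\<^sub>F h in at_right 0. \<bar>f (x + h) - f x\<bar> < e"
proof -
  obtain d where "0 < d" and d: "\<forall>x'\<in>{a..}. dist x' x < d \<longrightarrow> dist (f x') (f x) < e"
    using assms unfolding continuous_on_iff by (meson atLeast_iff)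
  have "\<forall>\<^sub>F h in at_right 0. 0 < h \<and> 1 * h < d"
    using \<open>0 < d\<close> by (intro eventually_conj eventually_at_right_less eventually_at_right_0_mult_less)
  then show ?thesis
    by (rule eventually_mono) (use d \<open>a \<le> x\<close> in \<open>auto simp: dist_real_def\<close>)
qed

section \<open>Doubling of variables\<close>

text \<open>The penalty is centred at z = x + \<epsilon> rather than at z = x, which
  pushes the supersolution variable into (xl, \<infinity>), the only place where w is a supersolution;
  the term \<beta> (x + z) confines the maximum to a compact set.\<close>

definition doubling :: "real \<Rightarrow> real \<Rightarrow> real \<Rightarrow> (nat \<Rightarrow> real \<Rightarrow> real) \<Rightarrow> (nat \<Rightarrow> real \<Rightarrow> real)
    \<Rightarrow> nat \<Rightarrow> real \<Rightarrow> real \<Rightarrow> real" where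
  "doubling xl \<epsilon> \<beta> u w j x z = u j x - w j z - ((x - z + \<epsilon>) / \<epsilon>)\<^sup>2 - \<beta> * (x + z - 2 * xl)"

definition is_doubling_max :: "real \<Rightarrow> real \<Rightarrow> real \<Rightarrow> (nat \<Rightarrow> real \<Rightarrow> real) \<Rightarrow> (nat \<Rightarrow> real \<Rightarrow> real)
    \<Rightarrow> nat \<Rightarrow> real \<Rightarrow> real \<Rightarrow> bool" where
  "is_doubling_max xl \<epsilon> \<beta> u w j1 xb yb \<longleftrightarrow> j1 \<in> {1,2} \<and> xl \<le> xb \<and> xl \<le> yb \<and>
     (\<forall>j x z. j \<in> {1,2} \<longrightarrow> xl \<le> x \<longrightarrow> xl \<le> z \<longrightarrow>
        doubling xl \<epsilon> \<beta> u w j x z \<le> doubling xl \<epsilon> \<beta> u w j1 xb yb)"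

lemma is_doubling_maxD:
  assumes "is_doubling_max xl \<epsilon> \<beta> u w j1 xb yb"
  shows "j1 \<in> {1,2}" and "xl \<le> xb" and "xl \<le> yb"
    and "\<And>j x z. j \<in> {1,2} \<Longrightarrow> xl \<le> x \<Longrightarrow> xl \<le> z \<Longrightarrow>
      doubling xl \<epsilon> \<beta> u w j x z \<le> doubling xl \<epsilon> \<beta> u w j1 xb yb"
  using assms unfolding is_doubling_max_def by blast+

lemma doubling_shifted_diagonal:
  "\<epsilon> \<noteq> 0 \<Longrightarrow> doubling xl \<epsilon> \<beta> u w j x (x + \<epsilon>) = u j x - w j (x + \<epsilon>) - \<beta> * (2 * (x - xl) + \<epsilon>)"
  by (simp add: doubling_def algebra_simps)

lemma doubling_le:
  assumes "\<bar>u j x\<bar> \<le> C" and "\<bar>w j z\<bar> \<le> C"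
  shows "doubling xl \<epsilon> \<beta> u w j x z \<le> 2 * C - \<beta> * (x + z - 2 * xl)"
  using assms zero_le_power2[of "(x - z + \<epsilon>) / \<epsilon>"] unfolding doubling_def abs_le_iff by linarith

lemma doubling_ge_at_lower_end:
  assumes "\<bar>u j xl\<bar> \<le> C" and "\<bar>w j (xl + \<epsilon>)\<bar> \<le> C" and "0 < \<epsilon>" and "\<epsilon> \<le> 1" and "0 \<le> \<beta>"
  shows "- 2 * C - \<beta> \<le> doubling xl \<epsilon> \<beta> u w j xl (xl + \<epsilon>)"
proof -
  have "\<beta> * \<epsilon> \<le> \<beta>" using assms(4,5) by (simp add: mult_left_le)
  then show ?thesis using assms(1-3) by (simp add: doubling_shifted_diagonal abs_le_iff)
qed

lemma doubling_attains_max: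
  assumes cont: "\<forall>j\<in>{1,2}. continuous_on {xl..} (u j)" "\<forall>j\<in>{1,2}. continuous_on {xl..} (w j)"
    and bound: "\<And>j x. j \<in> {1,2} \<Longrightarrow> xl \<le> x \<Longrightarrow> \<bar>u j x\<bar> \<le> C \<and> \<bar>w j x\<bar> \<le> C"
    and "0 < \<epsilon>" and "\<epsilon> \<le> 1" and "0 < \<beta>"
  shows "\<exists>j1 xb yb. is_doubling_max xl \<epsilon> \<beta> u w j1 xb yb"
proof -
  let ?\<Phi> = "doubling xl \<epsilon> \<beta> u w"
  define g where "g p = max (?\<Phi> 1 (fst p) (snd p)) (?\<Phi> 2 (fst p) (snd p))" for p
  define R where "R = 4 * C / \<beta> + 1"
  define K where "K = {xl..xl + R} \<times> {xl..xl + R}"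
  have "0 \<le> C" using bound[of 1 xl] by auto
  then have "1 \<le> R" using \<open>0 < \<beta>\<close> by (simp add: R_def)
  have "- 2 * C - \<beta> \<le> g (xl, xl + \<epsilon>)"
    using doubling_ge_at_lower_end[of u 1 xl C w \<epsilon> \<beta>] bound[of 1 xl] bound[of 1 "xl + \<epsilon>"] assms(4-)
    unfolding g_def by (simp add: le_max_iff_disj)
  moreover have "?\<Phi> j x z \<le> - 2 * C - \<beta>" if "j \<in> {1,2}" "xl \<le> x" "xl \<le> z" "R < x + z - 2 * xl" for j x z
  proof -
    have "4 * C + \<beta> \<le> \<beta> * (x + z - 2 * xl)"
      using that(4) \<open>0 < \<beta>\<close> mult_strict_left_mono[OF that(4) \<open>0 < \<beta>\<close>] by (simp add: R_def field_simps)
    then show ?thesis using doubling_le[of u j x C w z xl \<epsilon> \<beta>] bound that(1-3) by auto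
  qed
  ultimately have off_K: "g q \<le> g (xl, xl + \<epsilon>)" if "q \<in> {xl..} \<times> {xl..} - K" for q
    using that unfolding g_def by (cases q) (fastforce simp: K_def)
  have "continuous_on K (\<lambda>p. ?\<Phi> j (fst p) (snd p))" if "j \<in> {1,2}" for j
  proof -
    have "continuous_on K (\<lambda>p. u j (fst p))"
      by (rule continuous_on_compose2[OF _ continuous_on_fst[OF continuous_on_id]])
        (use cont that in \<open>auto simp: K_def\<close>)
    moreover have "continuous_on K (\<lambda>p. w j (snd p))"
      by (rule continuous_on_compose2[OF _ continuous_on_snd[OF continuous_on_id]])
        (use cont that in \<open>auto simp: K_def\<close>)
    ultimately show ?thesis
      unfolding doubling_def using \<open>0 < \<epsilon>\<close> by (intro continuous_intros) auto
  qed
  then have "continuous_on K g"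
    unfolding g_def by (intro continuous_intros) auto
  moreover have "compact K" unfolding K_def by (intro compact_Times compact_Icc)
  moreover have "(xl, xl + \<epsilon>) \<in> K" using \<open>0 < \<epsilon>\<close> \<open>\<epsilon> \<le> 1\<close> \<open>1 \<le> R\<close> by (simp add: K_def)
  ultimately obtain p where p: "p \<in> K" "\<And>q. q \<in> {xl..} \<times> {xl..} \<Longrightarrow> g q \<le> g p"
    using continuous_attains_sup_off_compact off_K by metis
  obtain xb yb where [simp]: "p = (xb, yb)" by fastforce
  have "\<exists>j1\<in>{1,2}. g p = ?\<Phi> j1 xb yb"
    by (simp add: g_def max_def)
  then obtain j1 where "j1 \<in> {1,2}" and "g p = ?\<Phi> j1 xb yb" ..
  then have "is_doubling_max xl \<epsilon> \<beta> u w j1 xb yb"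
    using p unfolding is_doubling_max_def by (force simp: g_def K_def)
  then show ?thesis by blast
qed

lemma doubling_max_sum_le:
  assumes max: "is_doubling_max xl \<epsilon> \<beta> u w j1 xb yb"
    and bound: "\<And>j x. j \<in> {1,2} \<Longrightarrow> xl \<le> x \<Longrightarrow> \<bar>u j x\<bar> \<le> C \<and> \<bar>w j x\<bar> \<le> C"
    and "0 < \<epsilon>" and "\<epsilon> \<le> 1" and "0 < \<beta>"
  shows "xb + yb - 2 * xl \<le> 4 * C / \<beta> + 1"
proof -
  have "- 2 * C - \<beta> \<le> doubling xl \<epsilon> \<beta> u w 1 xl (xl + \<epsilon>)"
    using bound[of 1 xl] bound[of 1 "xl + \<epsilon>"] assms(3-) by (intro doubling_ge_at_lower_end) auto
  also have "\<dots> \<le> doubling xl \<epsilon> \<beta> u w j1 xb yb"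
    using \<open>0 < \<epsilon>\<close> by (intro is_doubling_maxD(4)[OF max]) auto
  also have "\<dots> \<le> 2 * C - \<beta> * (xb + yb - 2 * xl)"
    using is_doubling_maxD(1-3)[OF max] bound by (intro doubling_le) auto
  finally have "\<beta> * (xb + yb - 2 * xl) \<le> 4 * C + \<beta>" by simp
  then show ?thesis using \<open>0 < \<beta>\<close> by (simp add: field_simps)
qed

lemma doubling_max_penalty_small:
  fixes xb yb \<epsilon> :: real
  defines "t \<equiv> (xb - yb + \<epsilon>) / \<epsilon>"
  assumes max: "is_doubling_max xl \<epsilon> \<beta> u w j1 xb yb"
    and "0 < \<epsilon>" and "0 \<le> \<beta>" and "\<eta> \<le> 1"
    and bound: "\<And>x. xl \<le> x \<Longrightarrow> \<bar>w j1 x\<bar> \<le> C"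
    and modulus: "\<bar>xb + \<epsilon> - yb\<bar> < \<delta> \<Longrightarrow> \<bar>w j1 (xb + \<epsilon>) - w j1 yb\<bar> < \<eta>"
    and \<epsilon>_small: "\<epsilon> * (2 * C + 1) < \<delta>" and \<beta>\<epsilon>_small: "\<beta> * \<epsilon> * (2 * C + 1) \<le> \<eta>"
  shows "t\<^sup>2 \<le> 2 * \<eta>"
proof -
  have j1: "j1 \<in> {1,2}" and "xl \<le> xb" and "xl \<le> yb" using is_doubling_maxD(1-3)[OF max] .
  have shift: "xb + \<epsilon> - yb = \<epsilon> * t" using \<open>0 < \<epsilon>\<close> by (simp add: t_def)
  have key: "t\<^sup>2 \<le> w j1 (xb + \<epsilon>) - w j1 yb + \<beta> * \<epsilon> * t"
  proof -
    have "doubling xl \<epsilon> \<beta> u w j1 xb (xb + \<epsilon>) \<le> doubling xl \<epsilon> \<beta> u w j1 xb yb"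
      using j1 \<open>xl \<le> xb\<close> \<open>0 < \<epsilon>\<close> by (intro is_doubling_maxD(4)[OF max]) auto
    moreover have "\<beta> * \<epsilon> * t = \<beta> * (xb + \<epsilon> - yb)" using shift by simp
    ultimately show ?thesis
      using \<open>0 < \<epsilon>\<close> unfolding doubling_def t_def[symmetric] by (simp add: algebra_simps)
  qed
  have "0 \<le> C" using abs_ge_zero[of "w j1 yb"] bound[OF \<open>xl \<le> yb\<close>] by linarith
  have "0 \<le> \<beta> * \<epsilon>" using \<open>0 < \<epsilon>\<close> \<open>0 \<le> \<beta>\<close> by simp
  have "\<beta> * \<epsilon> * 1 \<le> \<beta> * \<epsilon> * (2 * C + 1)"
    using \<open>0 \<le> \<beta> * \<epsilon>\<close> \<open>0 \<le> C\<close> by (intro mult_left_mono) auto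
  then have "\<beta> * \<epsilon> \<le> 1" using \<beta>\<epsilon>_small \<open>\<eta> \<le> 1\<close> by linarith
  have "\<beta> * \<epsilon> * t \<le> \<beta> * \<epsilon> * \<bar>t\<bar>" using \<open>0 \<le> \<beta> * \<epsilon>\<close> by (intro mult_left_mono) auto
  then have "\<bar>t\<bar> \<le> 2 * C + 1"
    using key bound[of "xb + \<epsilon>"] bound[OF \<open>xl \<le> yb\<close>] \<open>xl \<le> xb\<close> \<open>0 < \<epsilon>\<close> \<open>0 \<le> C\<close> \<open>\<beta> * \<epsilon> \<le> 1\<close>
    by (intro abs_le_if_sq_le_linear) (auto simp: abs_le_iff)
  then have "\<beta> * \<epsilon> * t \<le> \<beta> * \<epsilon> * (2 * C + 1)" and "\<epsilon> * \<bar>t\<bar> \<le> \<epsilon> * (2 * C + 1)"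
    using \<open>0 \<le> \<beta> * \<epsilon>\<close> \<open>0 < \<epsilon>\<close> by (auto intro!: mult_left_mono)
  moreover have "\<bar>xb + \<epsilon> - yb\<bar> = \<epsilon> * \<bar>t\<bar>" using shift \<open>0 < \<epsilon>\<close> by (simp add: abs_mult)
  ultimately have "\<bar>w j1 (xb + \<epsilon>) - w j1 yb\<bar> < \<eta>" using modulus \<epsilon>_small by linarith
  then show ?thesis using key \<open>\<beta> * \<epsilon> * t \<le> \<beta> * \<epsilon> * (2 * C + 1)\<close> \<beta>\<epsilon>_small by linarith
qed

lemma doubling_max_sub_ineq:
  fixes xb yb \<epsilon> :: real
  defines "p \<equiv> 2 * (xb - yb + \<epsilon>) / \<epsilon>\<^sup>2"
  assumes sub: "visc_sub \<rho> r \<gamma> y lam xl {xl..} u" and max: "is_doubling_max xl \<epsilon> \<beta> u w j1 xb yb"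
  shows "ereal (\<rho> * u j1 xb) \<le> Ham r \<gamma> xb (y j1) (p + \<beta>) + ereal (lam j1 * (u (3 - j1) xb - u j1 xb))"
proof -
  define \<phi> where "\<phi> = (\<lambda>x. 1 / \<epsilon>\<^sup>2 * (x - (yb - \<epsilon>))\<^sup>2 + \<beta> * x + 0)"
  have "u j1 x - \<phi> x = doubling xl \<epsilon> \<beta> u w j1 x yb + w j1 yb + \<beta> * (yb - 2 * xl)" for x
    by (simp add: \<phi>_def doubling_def power_divide algebra_simps)
  then have "loc_max_rel {xl..} (\<lambda>x. u j1 x - \<phi> x) xb"
    unfolding loc_max_rel_def using is_doubling_maxD[OF max] by (intro exI[of _ 1]) auto
  moreover have "smooth_fun \<phi>" unfolding \<phi>_def by (rule smooth_fun_quadratic)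
  moreover have "deriv \<phi> xb = p + \<beta>"
    unfolding \<phi>_def deriv_quadratic p_def by (simp add: field_simps)
  ultimately show ?thesis
    using visc_subD[OF sub _ is_doubling_maxD(1)[OF max]] is_doubling_maxD(2)[OF max] by (metis atLeast_iff)
qed

lemma doubling_max_super_ineq:
  fixes xb yb \<epsilon> :: real
  defines "p \<equiv> 2 * (xb - yb + \<epsilon>) / \<epsilon>\<^sup>2"
  assumes super: "visc_super \<rho> r \<gamma> y lam xl {xl<..} w" and max: "is_doubling_max xl \<epsilon> \<beta> u w j1 xb yb"
    and "xl < yb"
  shows "Ham r \<gamma> yb (y j1) (p - \<beta>) + ereal (lam j1 * (w (3 - j1) yb - w j1 yb)) \<le> ereal (\<rho> * w j1 yb)"
proof -
  define \<psi> where "\<psi> = (\<lambda>z. - 1 / \<epsilon>\<^sup>2 * (z - (xb + \<epsilon>))\<^sup>2 + (- \<beta>) * z + 0)"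
  have "w j1 z - \<psi> z = u j1 xb - doubling xl \<epsilon> \<beta> u w j1 xb z - \<beta> * (xb - 2 * xl)" for z
    by (simp add: \<psi>_def doubling_def power_divide power2_commute algebra_simps)
  then have "loc_min_rel {xl..} (\<lambda>z. w j1 z - \<psi> z) yb"
    unfolding loc_min_rel_def using is_doubling_maxD[OF max] by (intro exI[of _ 1]) auto
  moreover have "smooth_fun \<psi>" unfolding \<psi>_def by (rule smooth_fun_quadratic)
  moreover have "deriv \<psi> yb = p - \<beta>"
    unfolding \<psi>_def deriv_quadratic p_def by (simp add: field_split_simps)
  ultimately show ?thesis
    using visc_superD[OF super _ is_doubling_maxD(1)[OF max]] \<open>xl < yb\<close> by (metis greaterThan_iff)
qed

lemma doubling_max_visc_ineq:
  fixes xb yb \<epsilon> \<beta> :: real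
  defines "t \<equiv> (xb - yb + \<epsilon>) / \<epsilon>"
  assumes lam: "0 \<le> lam 1" "0 \<le> lam 2"
    and sub: "visc_sub \<rho> r \<gamma> y lam xl {xl..} u" and super: "visc_super \<rho> r \<gamma> y lam xl {xl<..} w"
    and max: "is_doubling_max xl \<epsilon> \<beta> u w j1 xb yb" and "0 < \<epsilon>" and "0 \<le> \<beta>" and "xl < yb"
  shows "\<rho> * (u j1 xb - w j1 yb) \<le> 2 * r * (t\<^sup>2 - t) + \<beta> * (r * (xb + yb) + 2 * y j1)"
proof -
  define p where "p = 2 * (xb - yb + \<epsilon>) / \<epsilon>\<^sup>2"
  have j1: "j1 \<in> {1,2}" using is_doubling_maxD(1)[OF max] .
  have "Ham r \<gamma> xb (y j1) (p + \<beta>)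
      \<le> Ham r \<gamma> yb (y j1) (p - \<beta>) + ereal ((r * xb + y j1) * (p + \<beta>) - (r * yb + y j1) * (p - \<beta>))"
    using \<open>0 \<le> \<beta>\<close> by (intro Ham_le_Ham_shift) simp
  then have visc: "\<rho> * u j1 xb - \<rho> * w j1 yb
      \<le> (r * xb + y j1) * (p + \<beta>) - (r * yb + y j1) * (p - \<beta>)
        + lam j1 * (u (3 - j1) xb - u j1 xb) - lam j1 * (w (3 - j1) yb - w j1 yb)"
    using doubling_max_sub_ineq[OF sub max] doubling_max_super_ineq[OF super max \<open>xl < yb\<close>]
    unfolding p_def by (intro ereal_sub_super_diff)
  have "doubling xl \<epsilon> \<beta> u w (3 - j1) xb yb \<le> doubling xl \<epsilon> \<beta> u w j1 xb yb"
    using is_doubling_maxD[OF max] j1 by auto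
  then have "u (3 - j1) xb - u j1 xb \<le> w (3 - j1) yb - w j1 yb"
    by (simp add: doubling_def)
  moreover have "0 \<le> lam j1" using lam j1 by auto
  ultimately have coupling: "lam j1 * (u (3 - j1) xb - u j1 xb) \<le> lam j1 * (w (3 - j1) yb - w j1 yb)"
    by (rule mult_left_mono)
  have "(r * xb + y j1) * (p + \<beta>) - (r * yb + y j1) * (p - \<beta>)
      = 2 * r * (t\<^sup>2 - t) + \<beta> * (r * (xb + yb) + 2 * y j1)"
    unfolding p_def using \<open>0 < \<epsilon>\<close> by (simp add: t_def field_simps power2_eq_square)
  with visc coupling show ?thesis by (simp add: algebra_simps)
qed

lemma doubling_max_value_bound:
  fixes xb yb \<epsilon> \<beta> :: real
  defines "t \<equiv> (xb - yb + \<epsilon>) / \<epsilon>"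
  assumes "0 \<le> \<rho>" and "r \<le> \<rho>" and lam: "0 \<le> lam 1" "0 \<le> lam 2"
    and sub: "visc_sub \<rho> r \<gamma> y lam xl {xl..} u" and super: "visc_super \<rho> r \<gamma> y lam xl {xl<..} w"
    and max: "is_doubling_max xl \<epsilon> \<beta> u w j1 xb yb" and "0 < \<epsilon>" and "0 \<le> \<beta>" and "xl < yb"
    and "\<bar>t\<bar> \<le> 1"
  shows "\<rho> * doubling xl \<epsilon> \<beta> u w j1 xb yb \<le> 4 * \<bar>r\<bar> * \<bar>t\<bar> + \<beta> * (2 * y j1 + 2 * r * xl)"
proof -
  have visc: "\<rho> * (u j1 xb - w j1 yb) \<le> 2 * r * (t\<^sup>2 - t) + \<beta> * (r * (xb + yb) + 2 * y j1)"
    unfolding t_def using lam sub super max \<open>0 < \<epsilon>\<close> \<open>0 \<le> \<beta>\<close> \<open>xl < yb\<close> by (rule doubling_max_visc_ineq)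
  have "t\<^sup>2 \<le> \<bar>t\<bar>"
    using \<open>\<bar>t\<bar> \<le> 1\<close> mult_right_le_one_le[of "\<bar>t\<bar>" "\<bar>t\<bar>"] by (simp add: power2_eq_square)
  then have "\<bar>t\<^sup>2 - t\<bar> \<le> 2 * \<bar>t\<bar>"
    using abs_ge_self[of t] abs_ge_minus_self[of t] zero_le_power2[of t] unfolding abs_le_iff by linarith
  have "r * (t\<^sup>2 - t) \<le> \<bar>r\<bar> * \<bar>t\<^sup>2 - t\<bar>"
    by (metis abs_ge_self abs_mult)
  also have "\<dots> \<le> \<bar>r\<bar> * (2 * \<bar>t\<bar>)"
    using \<open>\<bar>t\<^sup>2 - t\<bar> \<le> 2 * \<bar>t\<bar>\<close> by (rule mult_left_mono) simp
  finally have "r * (t\<^sup>2 - t) \<le> \<bar>r\<bar> * (2 * \<bar>t\<bar>)" .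
  moreover have "0 \<le> \<beta> * ((\<rho> - r) * (xb + yb - 2 * xl))"
    using \<open>0 \<le> \<beta>\<close> \<open>r \<le> \<rho>\<close> is_doubling_maxD(2)[OF max] \<open>xl < yb\<close> by simp
  moreover have "0 \<le> \<rho> * t\<^sup>2" using \<open>0 \<le> \<rho>\<close> by simp
  ultimately show ?thesis
    using visc unfolding doubling_def t_def[symmetric] by (simp add: algebra_simps)
qed

lemma doubling_max_value_eventually_le:
  assumes "0 \<le> \<rho>" and "r \<le> \<rho>" and lam: "0 \<le> lam 1" "0 \<le> lam 2"
    and sub: "visc_sub \<rho> r \<gamma> y lam xl {xl..} u" and super: "visc_super \<rho> r \<gamma> y lam xl {xl<..} w"
    and cont_w: "\<forall>j\<in>{1,2}. continuous_on {xl..} (w j)"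
    and bound: "\<And>j x. j \<in> {1,2} \<Longrightarrow> xl \<le> x \<Longrightarrow> \<bar>u j x\<bar> \<le> C \<and> \<bar>w j x\<bar> \<le> C"
    and "0 < \<beta>" and "0 < \<tau>" and "\<tau> \<le> 1/2"
  shows "\<forall>\<^sub>F \<epsilon> in at_right 0. \<forall>j1 xb yb. is_doubling_max xl \<epsilon> \<beta> u w j1 xb yb \<longrightarrow>
    \<rho> * doubling xl \<epsilon> \<beta> u w j1 xb yb \<le> 4 * \<bar>r\<bar> * \<tau> + \<beta> * (2 * y j1 + 2 * r * xl)"
proof -
  define \<eta> where "\<eta> = \<tau>\<^sup>2 / 2"
  define R where "R = 4 * C / \<beta> + 1"
  have "0 < \<eta>" using \<open>0 < \<tau>\<close> by (simp add: \<eta>_def)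
  have "\<tau>\<^sup>2 \<le> 1" using \<open>0 < \<tau>\<close> \<open>\<tau> \<le> 1/2\<close> by (intro power_le_one) auto
  then have "\<eta> \<le> 1" by (simp add: \<eta>_def)
  have "\<forall>j\<in>{1,2}. continuous_on {xl..xl + R + 1} (w j)"
    using cont_w continuous_on_subset[of "{xl..}" _ "{xl..xl + R + 1}"] by auto
  then obtain \<delta> where "0 < \<delta>" and modulus: "\<And>j a b. j \<in> {1,2} \<Longrightarrow> a \<in> {xl..xl + R + 1} \<Longrightarrow>
      b \<in> {xl..xl + R + 1} \<Longrightarrow> \<bar>a - b\<bar> < \<delta> \<Longrightarrow> \<bar>w j a - w j b\<bar> < \<eta>"
    using uniformly_continuous_pair_modulus[OF compact_Icc _ \<open>0 < \<eta>\<close>] by metis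
  have "\<forall>\<^sub>F \<epsilon> in at_right 0. 0 < \<epsilon> \<and> 1 * \<epsilon> < 1 \<and> (2 * C + 1) * \<epsilon> < \<delta> \<and> (\<beta> * (2 * C + 1)) * \<epsilon> < \<eta>"
    using \<open>0 < \<delta>\<close> \<open>0 < \<eta>\<close>
    by (intro eventually_conj eventually_at_right_less eventually_at_right_0_mult_less) auto
  then show ?thesis
  proof (rule eventually_mono, intro allI impI)
    fix \<epsilon> xb yb :: real and j1 :: nat
    define t where "t = (xb - yb + \<epsilon>) / \<epsilon>"
    assume \<epsilon>: "0 < \<epsilon> \<and> 1 * \<epsilon> < 1 \<and> (2 * C + 1) * \<epsilon> < \<delta> \<and> (\<beta> * (2 * C + 1)) * \<epsilon> < \<eta>"
      and max: "is_doubling_max xl \<epsilon> \<beta> u w j1 xb yb"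
    have j1: "j1 \<in> {1,2}" and "xl \<le> xb" and "xl \<le> yb" using is_doubling_maxD(1-3)[OF max] .
    have sum_le: "xb + yb - 2 * xl \<le> R"
      unfolding R_def by (rule doubling_max_sum_le[OF max bound]) (use \<epsilon> \<open>0 < \<beta>\<close> in auto)
    have "t\<^sup>2 \<le> 2 * \<eta>"
      unfolding t_def
      by (rule doubling_max_penalty_small[OF max, where C = C and \<delta> = \<delta>])
        (use \<epsilon> \<open>0 < \<beta>\<close> \<open>\<eta> \<le> 1\<close> bound[OF j1] \<open>xl \<le> xb\<close> \<open>xl \<le> yb\<close> sum_le in
          \<open>auto intro!: modulus[OF j1] simp: algebra_simps\<close>)
    then have "\<bar>t\<bar> \<le> \<tau>"
      using \<open>0 < \<tau>\<close> abs_le_square_iff[of t \<tau>] by (simp add: \<eta>_def)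
    have "xl < yb"
    proof -
      have "yb = xb + \<epsilon> * (1 - t)" using \<epsilon> by (simp add: t_def field_simps)
      moreover have "0 < \<epsilon> * (1 - t)" using \<open>\<bar>t\<bar> \<le> \<tau>\<close> \<open>\<tau> \<le> 1/2\<close> \<epsilon> by simp
      ultimately show ?thesis using \<open>xl \<le> xb\<close> by linarith
    qed
    have "\<bar>t\<bar> \<le> 1" using \<open>\<bar>t\<bar> \<le> \<tau>\<close> \<open>\<tau> \<le> 1/2\<close> by linarith
    have "\<rho> * doubling xl \<epsilon> \<beta> u w j1 xb yb \<le> 4 * \<bar>r\<bar> * \<bar>t\<bar> + \<beta> * (2 * y j1 + 2 * r * xl)"
      unfolding t_def
      by (rule doubling_max_value_bound[OF assms(1-6) max])
        (use \<epsilon> \<open>0 < \<beta>\<close> \<open>xl < yb\<close> \<open>\<bar>t\<bar> \<le> 1\<close>[unfolded t_def] in auto)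
    moreover have "4 * \<bar>r\<bar> * \<bar>t\<bar> \<le> 4 * \<bar>r\<bar> * \<tau>"
      using \<open>\<bar>t\<bar> \<le> \<tau>\<close> by (simp add: mult_left_mono)
    ultimately show "\<rho> * doubling xl \<epsilon> \<beta> u w j1 xb yb \<le> 4 * \<bar>r\<bar> * \<tau> + \<beta> * (2 * y j1 + 2 * r * xl)"
      by linarith
  qed
qed

section \<open>Comparison principle and uniqueness\<close>

lemma comparison_principle:
  assumes "0 < \<rho>" and "r < \<rho>" and lam: "0 \<le> lam 1" "0 \<le> lam 2"
    and cont_u: "\<forall>j\<in>{1,2}. continuous_on {xl..} (u j)"
    and cont_w: "\<forall>j\<in>{1,2}. continuous_on {xl..} (w j)"
    and "bounded_pair xl u" and "bounded_pair xl w"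
    and sub: "visc_sub \<rho> r \<gamma> y lam xl {xl..} u" and super: "visc_super \<rho> r \<gamma> y lam xl {xl<..} w"
    and j0: "j0 \<in> {1,2}" and "xl \<le> x0"
  shows "u j0 x0 \<le> w j0 x0"
proof (rule ccontr)
  define \<delta>0 where "\<delta>0 = u j0 x0 - w j0 x0"
  assume "\<not> u j0 x0 \<le> w j0 x0"
  then have "0 < \<delta>0" by (simp add: \<delta>0_def)
  obtain C where bound: "\<And>j x. j \<in> {1,2} \<Longrightarrow> xl \<le> x \<Longrightarrow> \<bar>u j x\<bar> \<le> C \<and> \<bar>w j x\<bar> \<le> C"
    using bounded_pairs_common_bound[OF assms(7,8)] by metis
  define A where "A = 2 * \<bar>y 1\<bar> + 2 * \<bar>y 2\<bar> + 2 * \<bar>r * xl\<bar>"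
  have "\<forall>\<^sub>F \<tau> in at_right 0. 2 * \<tau> < 1 \<and> (4 * \<bar>r\<bar>) * \<tau> < \<rho> * \<delta>0 / 8"
    using \<open>0 < \<rho>\<close> \<open>0 < \<delta>0\<close> by (intro eventually_conj eventually_at_right_0_mult_less) auto
  then obtain \<tau> where "0 < \<tau>" "2 * \<tau> < 1" "4 * \<bar>r\<bar> * \<tau> < \<rho> * \<delta>0 / 8"
    by (auto dest!: exists_pos_if_eventually_at_right_0)
  have "\<forall>\<^sub>F \<beta> in at_right 0. (2 * (x0 - xl) + 1) * \<beta> < \<delta>0 / 4 \<and> A * \<beta> < \<rho> * \<delta>0 / 8"
    using \<open>0 < \<rho>\<close> \<open>0 < \<delta>0\<close> by (intro eventually_conj eventually_at_right_0_mult_less) auto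
  then obtain \<beta> where "0 < \<beta>" "\<beta> * (2 * (x0 - xl) + 1) < \<delta>0 / 4" "\<beta> * A < \<rho> * \<delta>0 / 8"
    by (auto dest!: exists_pos_if_eventually_at_right_0 simp: mult.commute)
  have "\<forall>\<^sub>F \<epsilon> in at_right 0. \<forall>j1 xb yb. is_doubling_max xl \<epsilon> \<beta> u w j1 xb yb \<longrightarrow>
      \<rho> * doubling xl \<epsilon> \<beta> u w j1 xb yb \<le> 4 * \<bar>r\<bar> * \<tau> + \<beta> * (2 * y j1 + 2 * r * xl)"
    using \<open>0 < \<beta>\<close> \<open>0 < \<tau>\<close> \<open>2 * \<tau> < 1\<close> \<open>0 < \<rho>\<close> \<open>r < \<rho>\<close>
    by (intro doubling_max_value_eventually_le[OF _ _ lam sub super cont_w bound]) auto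
  moreover have "\<forall>\<^sub>F \<epsilon> in at_right 0. \<bar>w j0 (x0 + \<epsilon>) - w j0 x0\<bar> < \<delta>0 / 4"
    using cont_w j0 \<open>xl \<le> x0\<close> \<open>0 < \<delta>0\<close> by (intro continuous_on_eventually_right_shift) auto
  moreover have "\<forall>\<^sub>F \<epsilon> in at_right (0::real). \<epsilon> < 1"
    using eventually_at_right_0_mult_less[of 1 1] by simp
  ultimately have "\<forall>\<^sub>F \<epsilon> in at_right 0. (\<forall>j1 xb yb. is_doubling_max xl \<epsilon> \<beta> u w j1 xb yb \<longrightarrow>
      \<rho> * doubling xl \<epsilon> \<beta> u w j1 xb yb \<le> 4 * \<bar>r\<bar> * \<tau> + \<beta> * (2 * y j1 + 2 * r * xl))
      \<and> \<bar>w j0 (x0 + \<epsilon>) - w j0 x0\<bar> < \<delta>0 / 4 \<and> \<epsilon> < 1"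
    by (simp add: eventually_conj_iff)
  then obtain \<epsilon> where "0 < \<epsilon>" and "\<epsilon> < 1"
    and cont_at_x0: "\<bar>w j0 (x0 + \<epsilon>) - w j0 x0\<bar> < \<delta>0 / 4"
    and value_le: "\<And>j1 xb yb. is_doubling_max xl \<epsilon> \<beta> u w j1 xb yb \<Longrightarrow>
      \<rho> * doubling xl \<epsilon> \<beta> u w j1 xb yb \<le> 4 * \<bar>r\<bar> * \<tau> + \<beta> * (2 * y j1 + 2 * r * xl)"
    by (auto dest!: exists_pos_if_eventually_at_right_0)
  obtain j1 xb yb where max: "is_doubling_max xl \<epsilon> \<beta> u w j1 xb yb"
    using doubling_attains_max[OF cont_u cont_w bound \<open>0 < \<epsilon>\<close> less_imp_le[OF \<open>\<epsilon> < 1\<close>] \<open>0 < \<beta>\<close>] by blast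
  have "\<delta>0 / 2 \<le> doubling xl \<epsilon> \<beta> u w j0 x0 (x0 + \<epsilon>)"
  proof -
    have "\<beta> * (2 * (x0 - xl) + \<epsilon>) \<le> \<beta> * (2 * (x0 - xl) + 1)"
      using \<open>0 < \<beta>\<close> \<open>\<epsilon> < 1\<close> by simp
    moreover have "doubling xl \<epsilon> \<beta> u w j0 x0 (x0 + \<epsilon>) = u j0 x0 - w j0 (x0 + \<epsilon>) - \<beta> * (2 * (x0 - xl) + \<epsilon>)"
      using \<open>0 < \<epsilon>\<close> by (simp add: doubling_shifted_diagonal)
    ultimately show ?thesis
      using cont_at_x0 \<open>\<beta> * (2 * (x0 - xl) + 1) < \<delta>0 / 4\<close> unfolding \<delta>0_def abs_less_iff
      by argo
  qed
  also have "\<dots> \<le> doubling xl \<epsilon> \<beta> u w j1 xb yb"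
    using \<open>xl \<le> x0\<close> \<open>0 < \<epsilon>\<close> by (intro is_doubling_maxD(4)[OF max j0]) auto
  finally have "\<rho> * (\<delta>0 / 2) \<le> \<rho> * doubling xl \<epsilon> \<beta> u w j1 xb yb"
    using \<open>0 < \<rho>\<close> by simp
  moreover have "\<beta> * (2 * y j1 + 2 * r * xl) \<le> \<beta> * A"
    using is_doubling_maxD(1)[OF max] \<open>0 < \<beta>\<close> abs_ge_self[of "r * xl"]
    by (auto simp: A_def intro!: mult_left_mono)
  ultimately show False
    using value_le[OF max] \<open>4 * \<bar>r\<bar> * \<tau> < \<rho> * \<delta>0 / 8\<close> \<open>\<beta> * A < \<rho> * \<delta>0 / 8\<close> \<open>0 < \<rho>\<close> \<open>0 < \<delta>0\<close>
      mult_pos_pos[OF \<open>0 < \<rho>\<close> \<open>0 < \<delta>0\<close>] by linarith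
qed

theorem mainTheorem5:
  fixes \<rho> r \<gamma> xl :: real and y lam :: "nat \<Rightarrow> real" and v w :: "nat \<Rightarrow> real \<Rightarrow> real"
  assumes "\<rho> > 0" and "r < \<rho>"
    and "0 < y 1" and "y 1 < y 2"
    and "\<gamma> > 1"
    and "xl \<le> 0" and "\<rho> * xl + y 1 > 0" and "\<rho> * xl + y 2 > 0"
    and "lam 1 \<ge> 0" and "lam 2 \<ge> 0"
    and "bounded_pair xl v" and "constrained_visc_sol \<rho> r \<gamma> y lam xl v"
    and "bounded_pair xl w" and "constrained_visc_sol \<rho> r \<gamma> y lam xl w"
  shows "\<forall>j\<in>{1,2}. \<forall>x\<in>{xl..}. v j x = w j x"
proof (intro ballI)
  fix j :: nat and x :: real assume "j \<in> {1,2}" and "x \<in> {xl..}"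
  have v: "\<forall>j\<in>{1,2}. continuous_on {xl..} (v j)" "visc_sub \<rho> r \<gamma> y lam xl {xl..} v"
      "visc_super \<rho> r \<gamma> y lam xl {xl<..} v"
    using assms(12) unfolding constrained_visc_sol_def by auto
  have w: "\<forall>j\<in>{1,2}. continuous_on {xl..} (w j)" "visc_sub \<rho> r \<gamma> y lam xl {xl..} w"
      "visc_super \<rho> r \<gamma> y lam xl {xl<..} w"
    using assms(14) unfolding constrained_visc_sol_def by auto
  have "v j x \<le> w j x"
    using comparison_principle[OF assms(1,2,9,10) v(1) w(1) assms(11,13) v(2) w(3) \<open>j \<in> {1,2}\<close>]
      \<open>x \<in> {xl..}\<close> by simp
  moreover have "w j x \<le> v j x"
    using comparison_principle[OF assms(1,2,9,10) w(1) v(1) assms(13,11) w(2) v(3) \<open>j \<in> {1,2}\<close>]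
      \<open>x \<in> {xl..}\<close> by simp
  ultimately show "v j x = w j x" by simp
qed

end
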